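(* There is a quantity $C=\mathrm{polylog}(d,n,1/\eta)$ such that, assuming $d\ge C$, for every $\delta\in(0,1)$ and every fixed symmetric matrix $M\in\mathbb R^{d\times d}$ of rank at most $k$ (independent of the samples), if $n\ge Ck^2d/\delta^2$ then with probability at least $1-\eta$, $$\Big\|\frac1n X\mathcal A(M)\Big\|_2=\Big\|\frac1n\sum_{i=1}^n(\boldsymbol x_i^\top M\boldsymbol x_i)\,\boldsymbol x_i\Big\|_2\le\delta\|M\|_2.$$
   Context: $\boldsymbol x_1,\dots,\boldsymbol x_n$ are i.i.d. standard Gaussian vectors in $\mathbb R^d$, $X=[\boldsymbol x_1,\dots,\boldsymbol x_n]\in\mathbb R^{d\times n}$, and $\mathcal A(M)=(\boldsymbol x_i^\top M\boldsymbol x_i)_{i=1}^n$. $\|\cdot\|_2$ is the spectral/Euclidean norm; $\eta\in(0,1)$ is a failure probability. *)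

theory Defs
  imports "HOL-Probability.Probability" "Jordan_Normal_Form.DL_Rank"
begin

definition vnorm :: "real vec \<Rightarrow> real" where
  "vnorm v = sqrt (\<Sum>i<dim_vec v. (v $ i)\<^sup>2)"

definition spec_norm :: "real mat \<Rightarrow> real" where
  "spec_norm M = Sup ((\<lambda>v. vnorm (M *\<^sub>v v)) ` {v \<in> carrier_vec (dim_col M). vnorm v = 1})"

text \<open>Joint law of n i.i.d. standard Gaussian vectors in R^d; a sample is
  \<omega> :: nat \<Rightarrow> nat \<Rightarrow> real, with x_i = (\<omega> i j)_{j<d}.\<close>
definition gauss_samples :: "nat \<Rightarrow> nat \<Rightarrow> (nat \<Rightarrow> nat \<Rightarrow> real) measure" where
  "gauss_samples d n = PiM {..<n} (\<lambda>_. PiM {..<d} (\<lambda>_. density lborel std_normal_density))"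

definition sample_vec :: "nat \<Rightarrow> (nat \<Rightarrow> nat \<Rightarrow> real) \<Rightarrow> nat \<Rightarrow> real vec" where
  "sample_vec d \<omega> i = vec d (\<lambda>j. \<omega> i j)"

definition data_mat :: "nat \<Rightarrow> nat \<Rightarrow> (nat \<Rightarrow> nat \<Rightarrow> real) \<Rightarrow> real mat" where
  "data_mat d n \<omega> = mat d n (\<lambda>(j, i). \<omega> i j)"

definition meas_op :: "nat \<Rightarrow> nat \<Rightarrow> (nat \<Rightarrow> nat \<Rightarrow> real) \<Rightarrow> real mat \<Rightarrow> real vec" where
  "meas_op d n \<omega> M = vec n (\<lambda>i. sample_vec d \<omega> i \<bullet> (M *\<^sub>v sample_vec d \<omega> i))"

end

theory Submission
  imports Defs "Jordan_Normal_Form.Gram_Schmidt"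
begin

text \<open>Write \<open>q(x) = x\<^sup>T M x\<close>. The \<open>j\<close>-th coordinate of \<open>X \<A>(M)\<close> is the sum of the \<open>n\<close> independent
  centred variables \<open>x\<^sub>i\<^sub>j q(x\<^sub>i)\<close>; they are centred because \<open>q\<close> is even while \<open>x\<^sub>j\<close> is odd and
  the Gaussian law is symmetric. If \<open>u\<^sub>1, \<dots>, u\<^sub>r\<close> is an orthonormal basis of the column space
  of \<open>M\<close> (\<open>r \<le> k\<close>), then \<open>|q(x)| \<le> \<parallel>M\<parallel> \<Sum>\<^sub>l (u\<^sub>l\<^sup>T x)\<^sup>2\<close>. Each \<open>x\<^sub>i\<^sub>j\<close> and each \<open>u\<^sub>l\<^sup>T x\<^sub>i\<close> is standard normal,
  so off an event of probability \<open>\<eta>/2\<close> all of them are bounded by \<open>T = O(\<surd>log(nd/\<eta>))\<close>, and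
  the summands, truncated to that event, are bounded by \<open>\<parallel>M\<parallel> r T\<^sup>3\<close> and remain odd.
  Hoeffding's inequality then bounds every coordinate by \<open>\<delta> \<parallel>M\<parallel> / \<surd>d\<close> off a second event of
  probability \<open>\<eta>/2\<close>, as soon as \<open>n \<greatersim> d r\<^sup>2 log\<^sup>4(nd/\<eta>) / \<delta>\<^sup>2\<close>.\<close>

unbundle no vec_syntax
unbundle no inner_syntax

section \<open>Gaussian tails\<close>

lemma std_normal_density_tail_le:
  fixes T x :: real
  assumes T: "0 \<le> T"
  shows "indicator {x. T \<le> \<bar>x\<bar>} x * std_normal_density x
     \<le> sqrt 2 * exp (-T\<^sup>2/4) * normal_density 0 (sqrt 2) x"
proof (cases "T \<le> \<bar>x\<bar>")
  case True
  hence "T\<^sup>2 \<le> \<bar>x\<bar>\<^sup>2" using T by (intro power_mono) auto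
  hence e1: "exp (-x\<^sup>2/4) \<le> exp (-T\<^sup>2/4)" by simp
  have nd: "normal_density 0 (sqrt 2) x = 1 / sqrt (4 * pi) * exp (- x\<^sup>2 / 4)"
    by (simp add: normal_density_def)
  have s: "sqrt (4 * pi) = sqrt 2 * sqrt (2*pi)"
    by (simp flip: real_sqrt_mult)
  have "std_normal_density x = (1 / sqrt (2 * pi)) * exp (- x\<^sup>2 / 2)"
    by (simp add: std_normal_density_def)
  also have "\<dots> = sqrt 2 * normal_density 0 (sqrt 2) x * exp (-x\<^sup>2/4)"
    unfolding nd s by (simp add: field_simps mult_exp_exp flip: exp_add)
  also have "\<dots> \<le> sqrt 2 * normal_density 0 (sqrt 2) x * exp (-T\<^sup>2/4)"
    using e1 by (intro mult_left_mono) auto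
  finally show ?thesis using True by (simp add: mult_ac)
qed simp

lemma std_normal_tail:
  fixes T :: real
  assumes T: "0 \<le> T"
  shows "measure (density lborel std_normal_density) {x. T \<le> \<bar>x\<bar>} \<le> 2 * exp (-T\<^sup>2/4)"
proof -
  have meas: "{x::real. T \<le> \<bar>x\<bar>} \<in> sets borel" by measurable
  have "emeasure (density lborel std_normal_density) {x. T \<le> \<bar>x\<bar>}
      = (\<integral>\<^sup>+x. ennreal (indicator {x. T \<le> \<bar>x\<bar>} x * std_normal_density x) \<partial>lborel)"
    using meas by (subst emeasure_density) (auto intro!: nn_integral_cong simp: indicator_def)
  also have "\<dots> \<le> (\<integral>\<^sup>+x. ennreal (sqrt 2 * exp (-T\<^sup>2/4)) * ennreal (normal_density 0 (sqrt 2) x) \<partial>lborel)"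
    by (intro nn_integral_mono)
       (auto simp flip: ennreal_mult intro!: ennreal_leI order.trans[OF std_normal_density_tail_le[OF T]])
  also have "\<dots> = ennreal (sqrt 2 * exp (-T\<^sup>2/4)) * (\<integral>\<^sup>+x. ennreal (normal_density 0 (sqrt 2) x) \<partial>lborel)"
    by (rule nn_integral_cmult) simp
  also have "(\<integral>\<^sup>+x. ennreal (normal_density 0 (sqrt 2) x) \<partial>lborel) = 1"
    by (subst nn_integral_eq_integral) auto
  finally have "measure (density lborel std_normal_density) {x. T \<le> \<bar>x\<bar>} \<le> sqrt 2 * exp (-T\<^sup>2/4)"
    by (simp add: measure_def enn2real_leI)
  also have "\<dots> \<le> 2 * exp (-T\<^sup>2/4)"
    using sqrt2_less_2 by (intro mult_right_mono) auto
  finally show ?thesis .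
qed

lemma indep_vars_PiM_components:
  assumes fin: "finite I" and M: "\<And>i. i \<in> I \<Longrightarrow> prob_space (M i)"
  shows "prob_space.indep_vars (PiM I M) M (\<lambda>i \<omega>. \<omega> i) I"
proof -
  interpret P: prob_space "PiM I M" by (intro prob_space_PiM M)
  show ?thesis
  proof (cases "I = {}")
    case True
    then show ?thesis unfolding P.indep_vars_def P.indep_sets_def by auto
  next
    case False
    have "distr (PiM I M) (PiM I M) (\<lambda>x. \<lambda>i\<in>I. x i) = distr (PiM I M) (PiM I M) (\<lambda>x. x)"
      by (intro distr_cong) (auto simp: space_PiM PiE_def extensional_restrict)
    also have "\<dots> = PiM I M" by simp
    also have "\<dots> = PiM I (\<lambda>i. distr (PiM I M) (M i) (\<lambda>\<omega>. \<omega> i))"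
      by (intro PiM_cong) (auto simp: distr_PiM_component M)
    finally show ?thesis
      using False by (subst P.indep_vars_iff_distr_eq_PiM') auto
  qed
qed

section \<open>Standard Gaussian vectors and samples\<close>

definition std_normal :: "real measure" where
  "std_normal = density lborel std_normal_density"

definition gauss_vec :: "nat \<Rightarrow> (nat \<Rightarrow> real) measure" where
  "gauss_vec d = PiM {..<d} (\<lambda>_. std_normal)"

lemma gauss_samples_eq: "gauss_samples d n = PiM {..<n} (\<lambda>_. gauss_vec d)"
  unfolding gauss_samples_def gauss_vec_def std_normal_def ..

lemma prob_space_std_normal: "prob_space std_normal"
  unfolding std_normal_def by (rule prob_space_normal_density) simp

lemma sets_std_normal [simp, measurable_cong]: "sets std_normal = sets borel"
  by (simp add: std_normal_def)

lemma prob_space_gauss_vec: "prob_space (gauss_vec d)"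
  unfolding gauss_vec_def by (intro prob_space_PiM prob_space_std_normal)

lemma prob_space_gauss_samples: "prob_space (gauss_samples d n)"
  unfolding gauss_samples_eq by (intro prob_space_PiM prob_space_gauss_vec)

text \<open>Outside \<open>{..<d}\<close> the coordinates of points of the product space are \<open>undefined\<close>,
  so no bound on \<open>j\<close> is needed.\<close>
lemma gauss_vec_component_measurable [measurable]:
  "(\<lambda>x. x j) \<in> borel_measurable (gauss_vec d)"
proof (cases "j < d")
  case True
  have "(\<lambda>x. x j) \<in> measurable (gauss_vec d) std_normal"
    unfolding gauss_vec_def using True by (intro measurable_component_singleton) auto
  then show ?thesis by (simp add: measurable_cong_sets[OF refl sets_std_normal])
next
  case False
  then have "x j = undefined" if "x \<in> space (gauss_vec d)" for x
    using that by (auto simp: gauss_vec_def space_PiM PiE_def extensional_def)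
  then show ?thesis by (subst measurable_cong[where g = "\<lambda>_. undefined"]) auto
qed

lemma gauss_samples_component_measurable [measurable]:
  "i < n \<Longrightarrow> (\<lambda>\<omega>. \<omega> i) \<in> measurable (gauss_samples d n) (gauss_vec d)"
  unfolding gauss_samples_eq by (rule measurable_component_singleton) simp

lemma distr_gauss_samples_component:
  "i < n \<Longrightarrow> distr (gauss_samples d n) (gauss_vec d) (\<lambda>\<omega>. \<omega> i) = gauss_vec d"
  unfolding gauss_samples_eq by (intro distr_PiM_component prob_space_gauss_vec) auto

lemma integral_gauss_samples_component:
  fixes f :: "(nat \<Rightarrow> real) \<Rightarrow> real"
  assumes [measurable]: "f \<in> borel_measurable (gauss_vec d)" and i: "i < n"
  shows "(\<integral>\<omega>. f (\<omega> i) \<partial>gauss_samples d n) = (\<integral>x. f x \<partial>gauss_vec d)"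
  using integral_distr[of "\<lambda>\<omega>. \<omega> i" "gauss_samples d n" "gauss_vec d" f] i
  by (simp add: distr_gauss_samples_component)

lemma measure_gauss_samples_component:
  assumes [measurable]: "Measurable.pred (gauss_vec d) Q" and i: "i < n"
  shows "measure (gauss_samples d n) {\<omega> \<in> space (gauss_samples d n). Q (\<omega> i)}
       = measure (gauss_vec d) {x \<in> space (gauss_vec d). Q x}"
proof -
  have "(\<lambda>\<omega>. \<omega> i) -` {x \<in> space (gauss_vec d). Q x} \<inter> space (gauss_samples d n)
      = {\<omega> \<in> space (gauss_samples d n). Q (\<omega> i)}"
    using measurable_space[OF gauss_samples_component_measurable[OF i]] by auto
  then show ?thesis
    using measure_distr[of "\<lambda>\<omega>. \<omega> i" "gauss_samples d n" "gauss_vec d" "{x \<in> space (gauss_vec d). Q x}"] i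
    by (simp add: distr_gauss_samples_component)
qed

lemma scalar_prod_vec: "v \<bullet> vec d x = (\<Sum>j<d. v $ j * x j)"
  by (simp add: scalar_prod_def atLeast0LessThan)

text \<open>Coordinates with \<open>v $ j = 0\<close> are dropped first, as \<open>sum_indep_normal\<close> needs positive
  variances.\<close>
lemma distributed_gauss_vec_unit_projection:
  assumes v: "v \<in> carrier_vec d" "v \<bullet> v = 1"
  shows "distributed (gauss_vec d) lborel (\<lambda>x. v \<bullet> vec d x) std_normal_density"
proof -
  interpret P: prob_space "gauss_vec d" by (rule prob_space_gauss_vec)
  define J where "J = {j. j < d \<and> v $ j \<noteq> 0}"
  have sumJ: "(\<Sum>j<d. f j) = (\<Sum>j\<in>J. f j)" if "\<And>j. v $ j = 0 \<Longrightarrow> f j = 0" for f :: "nat \<Rightarrow> real"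
    unfolding J_def using that by (intro sum.mono_neutral_right) auto
  have "(\<Sum>j<d. (v $ j)\<^sup>2) = 1"
    using v by (simp add: scalar_prod_def power2_eq_square atLeast0LessThan)
  hence "(\<Sum>j\<in>J. (v $ j)\<^sup>2) = 1" using sumJ[of "\<lambda>j. (v $ j)\<^sup>2"] by simp
  hence J1: "(\<Sum>j\<in>J. \<bar>v $ j\<bar>\<^sup>2) = 1" and "J \<noteq> {}" by auto
  have "P.indep_vars (\<lambda>_. std_normal) (\<lambda>j x. x j) {..<d}"
    using indep_vars_PiM_components[of "{..<d}" "\<lambda>_. std_normal"] prob_space_std_normal
    unfolding gauss_vec_def by auto
  hence "P.indep_vars (\<lambda>_. std_normal) (\<lambda>j x. x j) J"
    by (rule P.indep_vars_subset) (auto simp: J_def)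
  hence ind: "P.indep_vars (\<lambda>_. borel) (\<lambda>j x. v $ j * x j) J"
    by (rule P.indep_vars_compose2) (subst measurable_cong_sets[OF sets_std_normal refl], measurable)
  have distj: "distributed (gauss_vec d) lborel (\<lambda>x. v $ j * x j) (normal_density 0 \<bar>v $ j\<bar>)"
    if "j \<in> J" for j
  proof -
    have "distr (gauss_vec d) lborel (\<lambda>x. x j) = distr (gauss_vec d) std_normal (\<lambda>x. x j)"
      by (intro distr_cong) auto
    also have "\<dots> = std_normal"
      unfolding gauss_vec_def using that by (intro distr_PiM_component prob_space_std_normal) (auto simp: J_def)
    finally have "distributed (gauss_vec d) lborel (\<lambda>x. x j) std_normal_density"
      unfolding distributed_def std_normal_def by auto
    from P.normal_density_affine[OF this, of "v $ j" 0] that show ?thesis by (simp add: J_def)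
  qed
  have "distributed (gauss_vec d) lborel (\<lambda>x. \<Sum>j\<in>J. v $ j * x j)
          (normal_density (\<Sum>j\<in>J. 0) (sqrt (\<Sum>j\<in>J. \<bar>v $ j\<bar>\<^sup>2)))"
    by (rule P.sum_indep_normal[OF _ \<open>J \<noteq> {}\<close> ind]) (auto simp: J_def intro: distj)
  moreover have "(\<lambda>x. v \<bullet> vec d x) = (\<lambda>x. \<Sum>j\<in>J. v $ j * x j)"
    by (subst scalar_prod_vec, subst sumJ) auto
  ultimately show ?thesis using J1 by simp
qed

lemma gauss_vec_unit_tail:
  assumes v: "v \<in> carrier_vec d" "v \<bullet> v = 1" and T: "0 \<le> T"
  shows "measure (gauss_vec d) {x \<in> space (gauss_vec d). T \<le> \<bar>v \<bullet> vec d x\<bar>} \<le> 2 * exp (-T\<^sup>2/4)"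
proof -
  note dist = distributed_gauss_vec_unit_projection[OF v]
  have "{x \<in> space (gauss_vec d). T \<le> \<bar>v \<bullet> vec d x\<bar>}
      = (\<lambda>x. v \<bullet> vec d x) -` {y. T \<le> \<bar>y\<bar>} \<inter> space (gauss_vec d)"
    by auto
  then have "measure (gauss_vec d) {x \<in> space (gauss_vec d). T \<le> \<bar>v \<bullet> vec d x\<bar>}
        = measure (distr (gauss_vec d) lborel (\<lambda>x. v \<bullet> vec d x)) {y. T \<le> \<bar>y\<bar>}"
    using dist by (subst measure_distr) (auto simp: distributed_def)
  also have "\<dots> = measure (density lborel std_normal_density) {y. T \<le> \<bar>y\<bar>}"
    using dist by (simp add: distributed_def)
  also have "\<dots> \<le> 2 * exp (-T\<^sup>2/4)" by (rule std_normal_tail[OF T])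
  finally show ?thesis .
qed

section \<open>Symmetry and Hoeffding's inequality\<close>

definition reflect :: "nat \<Rightarrow> (nat \<Rightarrow> real) \<Rightarrow> nat \<Rightarrow> real" where
  "reflect d x = (\<lambda>j\<in>{..<d}. - x j)"

lemma reflect_measurable [measurable]: "reflect d \<in> measurable (gauss_vec d) (gauss_vec d)"
  unfolding reflect_def gauss_vec_def by measurable

lemma distr_std_normal_uminus: "distr std_normal std_normal uminus = std_normal"
proof -
  interpret N: prob_space std_normal by (rule prob_space_std_normal)
  have "distr std_normal lborel (\<lambda>x. x) = std_normal"
    by (rule distr_id2) simp
  hence "distributed std_normal lborel (\<lambda>x. x) std_normal_density"
    unfolding distributed_def by (auto simp: std_normal_def)
  from N.normal_density_affine[OF this, of "-1" 0]
  have "distributed std_normal lborel uminus std_normal_density" by simp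
  hence "distr std_normal lborel uminus = std_normal" by (simp add: distributed_def std_normal_def)
  moreover have "distr std_normal std_normal uminus = distr std_normal lborel uminus"
    by (rule distr_cong) auto
  ultimately show ?thesis by simp
qed

lemma distr_gauss_vec_reflect: "distr (gauss_vec d) (gauss_vec d) (reflect d) = gauss_vec d"
proof -
  have "distr (gauss_vec d) (gauss_vec d) (reflect d)
      = distr (PiM {..<d} (\<lambda>_. std_normal)) (PiM {..<d} (\<lambda>_. std_normal)) (compose {..<d} uminus)"
    unfolding gauss_vec_def reflect_def compose_def by simp
  also have "\<dots> = PiM {..<d} (\<lambda>_. distr std_normal std_normal uminus)"
    by (intro distr_PiM_finite_prob_space product_prob_spaceI prob_space_std_normal) auto
  finally show ?thesis by (simp add: distr_std_normal_uminus gauss_vec_def)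
qed

lemma integral_gauss_vec_odd:
  fixes f :: "(nat \<Rightarrow> real) \<Rightarrow> real"
  assumes [measurable]: "f \<in> borel_measurable (gauss_vec d)"
    and odd: "\<And>x. x \<in> space (gauss_vec d) \<Longrightarrow> f (reflect d x) = - f x"
  shows "(\<integral>x. f x \<partial>gauss_vec d) = 0"
proof -
  have "(\<integral>x. f x \<partial>gauss_vec d) = (\<integral>x. f x \<partial>distr (gauss_vec d) (gauss_vec d) (reflect d))"
    by (simp add: distr_gauss_vec_reflect)
  also have "\<dots> = (\<integral>x. f (reflect d x) \<partial>gauss_vec d)"
    by (rule integral_distr) auto
  also have "\<dots> = (\<integral>x. - f x \<partial>gauss_vec d)"
    by (rule Bochner_Integration.integral_cong) (auto simp: odd)
  finally show ?thesis by simp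
qed

lemma gauss_samples_hoeffding_odd:
  fixes W :: "(nat \<Rightarrow> real) \<Rightarrow> real"
  assumes W [measurable]: "W \<in> borel_measurable (gauss_vec d)"
    and bnd: "\<And>x. x \<in> space (gauss_vec d) \<Longrightarrow> \<bar>W x\<bar> \<le> B"
    and odd: "\<And>x. x \<in> space (gauss_vec d) \<Longrightarrow> W (reflect d x) = - W x"
    and B: "B > 0" and n: "n > 0" and \<epsilon>: "\<epsilon> \<ge> 0"
  shows "measure (gauss_samples d n) {\<omega> \<in> space (gauss_samples d n). \<epsilon> \<le> \<bar>\<Sum>i<n. W (\<omega> i)\<bar>}
           \<le> 2 * exp (- \<epsilon>\<^sup>2 / (2 * real n * B\<^sup>2))"
proof -
  let ?G = "gauss_samples d n"
  interpret G: prob_space ?G by (rule prob_space_gauss_samples)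
  have "G.indep_vars (\<lambda>_. gauss_vec d) (\<lambda>i \<omega>. \<omega> i) {..<n}"
    using indep_vars_PiM_components[of "{..<n}" "\<lambda>_. gauss_vec d"] prob_space_gauss_vec
    unfolding gauss_samples_eq by auto
  hence ind: "G.indep_vars (\<lambda>_. borel) (\<lambda>i \<omega>. W (\<omega> i)) {..<n}"
    by (rule G.indep_vars_compose2) auto
  interpret H: Hoeffding_ineq ?G "{..<n}" "\<lambda>i \<omega>. W (\<omega> i)" "\<lambda>_. -B" "\<lambda>_. B"
    "\<Sum>i<n. G.expectation (\<lambda>\<omega>. W (\<omega> i))"
  proof unfold_locales
    fix i assume "i \<in> {..<n}"
    have "W (\<omega> i) \<in> {-B..B}" if "\<omega> \<in> space ?G" for \<omega>
    proof -
      have "\<bar>W (\<omega> i)\<bar> \<le> B"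
        using bnd measurable_space[OF gauss_samples_component_measurable that] \<open>i \<in> {..<n}\<close> by simp
      then show ?thesis by (auto simp: abs_le_iff)
    qed
    then show "AE \<omega> in ?G. W (\<omega> i) \<in> {-B..B}" by (rule AE_I2)
  qed (use ind in simp_all)
  have "(\<Sum>i<n. G.expectation (\<lambda>\<omega>. W (\<omega> i))) = 0"
    by (intro sum.neutral ballI) (simp add: integral_gauss_samples_component integral_gauss_vec_odd[OF W odd])
  moreover have "measure ?G {\<omega> \<in> space ?G. \<epsilon> \<le> \<bar>(\<Sum>i<n. W (\<omega> i)) - (\<Sum>i<n. G.expectation (\<lambda>\<omega>. W (\<omega> i)))\<bar>}
         \<le> 2 * exp (-2 * \<epsilon>\<^sup>2 / (\<Sum>i<n. (B - - B)\<^sup>2))"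
    using B n by (intro H.Hoeffding_ineq_abs_ge[OF \<epsilon>]) simp
  moreover have "-2 * \<epsilon>\<^sup>2 / (\<Sum>i<n. (B - - B)\<^sup>2) = - \<epsilon>\<^sup>2 / (2 * real n * B\<^sup>2)"
    using B n by (simp add: power2_eq_square field_simps)
  ultimately show ?thesis by (simp add: mult.assoc)
qed

lemma measure_UN_le_card:
  assumes "finite I" "\<And>i. i \<in> I \<Longrightarrow> A i \<in> sets M" "\<And>i. i \<in> I \<Longrightarrow> measure M (A i) \<le> b"
  shows "measure M (\<Union>i\<in>I. A i) \<le> real (card I) * b"
  using measure_UNION_le[OF assms(1,2)] sum_bounded_above[of I "\<lambda>i. measure M (A i)" b] assms(3)
  by fastforce

lemma gauss_samples_unit_tail_union:
  assumes vs: "set vs \<subseteq> carrier_vec d" "\<And>v. v \<in> set vs \<Longrightarrow> v \<bullet> v = 1" and T: "0 \<le> T"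
  shows "measure (gauss_samples d n)
           {\<omega> \<in> space (gauss_samples d n). \<exists>i<n. \<exists>v\<in>set vs. T \<le> \<bar>v \<bullet> vec d (\<omega> i)\<bar>}
         \<le> real n * real (length vs) * (2 * exp (-T\<^sup>2/4))"
proof -
  let ?G = "gauss_samples d n"
  let ?E = "\<lambda>(i, v). {\<omega> \<in> space ?G. T \<le> \<bar>v \<bullet> vec d (\<omega> i)\<bar>}"
  have sets: "?E p \<in> sets ?G" if "p \<in> {..<n} \<times> set vs" for p
    using that by (cases p) (simp add: scalar_prod_vec)
  have "{\<omega> \<in> space ?G. \<exists>i<n. \<exists>v\<in>set vs. T \<le> \<bar>v \<bullet> vec d (\<omega> i)\<bar>} = (\<Union>p\<in>{..<n} \<times> set vs. ?E p)"
    by auto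
  also have "measure ?G \<dots> \<le> real (card ({..<n} \<times> set vs)) * (2 * exp (-T\<^sup>2/4))"
  proof (rule measure_UN_le_card)
    fix p assume p: "p \<in> {..<n} \<times> set vs"
    then obtain i v where "p = (i, v)" "i < n" "v \<in> set vs" by auto
    moreover have "v \<in> carrier_vec d" "v \<bullet> v = 1" using vs \<open>v \<in> set vs\<close> by auto
    ultimately show "measure ?G (?E p) \<le> 2 * exp (-T\<^sup>2/4)"
      using measure_gauss_samples_component[of "\<lambda>x. T \<le> \<bar>v \<bullet> vec d x\<bar>" d i n]
        gauss_vec_unit_tail[of v d T] vs T by (simp add: scalar_prod_vec)
  qed (use sets in auto)
  also have "\<dots> \<le> real n * real (length vs) * (2 * exp (-T\<^sup>2/4))"
    using card_length[of vs] by (intro mult_right_mono) (auto simp: card_cartesian_product intro!: mult_left_mono)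
  finally show ?thesis .
qed

lemma gauss_samples_hoeffding_odd_union:
  fixes W :: "nat \<Rightarrow> (nat \<Rightarrow> real) \<Rightarrow> real"
  assumes "finite J"
    and [measurable]: "\<And>j. j \<in> J \<Longrightarrow> W j \<in> borel_measurable (gauss_vec d)"
    and "\<And>j x. j \<in> J \<Longrightarrow> x \<in> space (gauss_vec d) \<Longrightarrow> \<bar>W j x\<bar> \<le> B"
    and "\<And>j x. j \<in> J \<Longrightarrow> x \<in> space (gauss_vec d) \<Longrightarrow> W j (reflect d x) = - W j x"
    and "B > 0" "n > 0" "\<epsilon> \<ge> 0"
  shows "measure (gauss_samples d n) {\<omega> \<in> space (gauss_samples d n). \<exists>j\<in>J. \<epsilon> \<le> \<bar>\<Sum>i<n. W j (\<omega> i)\<bar>}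
           \<le> real (card J) * (2 * exp (- \<epsilon>\<^sup>2 / (2 * real n * B\<^sup>2)))"
proof -
  let ?G = "gauss_samples d n"
  have "{\<omega> \<in> space ?G. \<exists>j\<in>J. \<epsilon> \<le> \<bar>\<Sum>i<n. W j (\<omega> i)\<bar>}
      = (\<Union>j\<in>J. {\<omega> \<in> space ?G. \<epsilon> \<le> \<bar>\<Sum>i<n. W j (\<omega> i)\<bar>})"
    by auto
  also have "measure ?G \<dots> \<le> real (card J) * (2 * exp (- \<epsilon>\<^sup>2 / (2 * real n * B\<^sup>2)))"
    using assms by (intro measure_UN_le_card gauss_samples_hoeffding_odd) auto
  finally show ?thesis .
qed

section \<open>Norms and quadratic forms\<close>

lemma cscalar_prod_real [simp]: "(v :: real vec) \<bullet>c w = v \<bullet> w"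
  by (simp add: scalar_prod_def)

lemma vnorm_eq_L2_set: "vnorm v = L2_set (\<lambda>i. v $ i) {..<dim_vec v}"
  by (simp add: vnorm_def L2_set_def)

lemma vnorm_nonneg: "vnorm v \<ge> 0"
  unfolding vnorm_def by (intro real_sqrt_ge_zero sum_nonneg) simp

lemma vnorm_sq: "(vnorm v)\<^sup>2 = v \<bullet> v"
proof -
  have "0 \<le> (\<Sum>i<dim_vec v. (v $ i)\<^sup>2)" by (intro sum_nonneg) simp
  hence "(vnorm v)\<^sup>2 = (\<Sum>i<dim_vec v. (v $ i)\<^sup>2)" unfolding vnorm_def by simp
  also have "\<dots> = v \<bullet> v" by (simp add: scalar_prod_def power2_eq_square atLeast0LessThan)
  finally show ?thesis .
qed

lemma vnorm_smult: "vnorm (c \<cdot>\<^sub>v v) = \<bar>c\<bar> * vnorm v"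
proof -
  have "vnorm (c \<cdot>\<^sub>v v) = sqrt (c\<^sup>2 * (\<Sum>i<dim_vec v. (v $ i)\<^sup>2))"
    unfolding vnorm_def by (simp add: power_mult_distrib sum_distrib_left)
  also have "\<dots> = \<bar>c\<bar> * vnorm v"
    unfolding vnorm_def by (simp add: real_sqrt_mult)
  finally show ?thesis .
qed

lemma vnorm_eq_0_iff: "v \<in> carrier_vec n \<Longrightarrow> vnorm v = 0 \<longleftrightarrow> v = 0\<^sub>v n"
  using vnorm_sq[of v] conjugate_square_eq_0_vec[of v n] by auto

lemma abs_scalar_prod_le_vnorm:
  assumes "dim_vec w = dim_vec v"
  shows "\<bar>v \<bullet> w\<bar> \<le> vnorm v * vnorm w"
proof -
  have "\<bar>v \<bullet> w\<bar> = \<bar>\<Sum>i<dim_vec v. v $ i * w $ i\<bar>"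
    using assms by (simp add: scalar_prod_def atLeast0LessThan)
  also have "\<dots> \<le> (\<Sum>i<dim_vec v. \<bar>v $ i\<bar> * \<bar>w $ i\<bar>)"
    by (rule order_trans[OF sum_abs]) (simp add: abs_mult)
  also have "\<dots> \<le> L2_set (\<lambda>i. v $ i) {..<dim_vec v} * L2_set (\<lambda>i. w $ i) {..<dim_vec v}"
    by (rule L2_set_mult_ineq)
  finally show ?thesis using assms by (simp add: vnorm_eq_L2_set)
qed

lemma vnorm_le_sqrt_dim:
  assumes "\<And>j. j < dim_vec v \<Longrightarrow> \<bar>v $ j\<bar> \<le> a"
  shows "vnorm v \<le> sqrt (dim_vec v) * a"
proof (cases "dim_vec v = 0")
  case False
  then have a: "0 \<le> a" using assms[of 0] abs_ge_zero[of "v $ 0"] by linarith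
  have "(v $ j)\<^sup>2 \<le> a\<^sup>2" if "j < dim_vec v" for j
    using power_mono[OF assms[OF that] abs_ge_zero, of 2] by simp
  then have "(\<Sum>j<dim_vec v. (v $ j)\<^sup>2) \<le> dim_vec v * a\<^sup>2"
    using sum_bounded_above[of "{..<dim_vec v}" "\<lambda>j. (v $ j)\<^sup>2" "a\<^sup>2"] by simp
  then show ?thesis
    unfolding vnorm_def using a by (metis real_sqrt_le_mono real_sqrt_mult real_sqrt_abs abs_of_nonneg)
qed (simp add: vnorm_def)

lemma bdd_above_spec_norm:
  "bdd_above ((\<lambda>v. vnorm (M *\<^sub>v v)) ` {v \<in> carrier_vec (dim_col M). vnorm v = 1})"
proof (rule bdd_aboveI2)
  fix v assume v: "v \<in> {v \<in> carrier_vec (dim_col M). vnorm v = 1}"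
  have "vnorm (M *\<^sub>v v) = L2_set (\<lambda>i. (M *\<^sub>v v) $ i) {..<dim_row M}"
    by (simp add: vnorm_eq_L2_set)
  also have "\<dots> \<le> (\<Sum>i<dim_row M. \<bar>(M *\<^sub>v v) $ i\<bar>)" by (rule L2_set_le_sum_abs)
  also have "\<dots> \<le> (\<Sum>i<dim_row M. vnorm (row M i))"
  proof (intro sum_mono)
    fix i assume "i \<in> {..<dim_row M}"
    then have "\<bar>(M *\<^sub>v v) $ i\<bar> = \<bar>row M i \<bullet> v\<bar>" by simp
    also have "\<dots> \<le> vnorm (row M i) * vnorm v"
      using v by (intro abs_scalar_prod_le_vnorm) auto
    finally show "\<bar>(M *\<^sub>v v) $ i\<bar> \<le> vnorm (row M i)" using v by simp
  qed
  finally show "vnorm (M *\<^sub>v v) \<le> (\<Sum>i<dim_row M. vnorm (row M i))" .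
qed

lemma vnorm_mult_mat_vec_le:
  assumes v: "v \<in> carrier_vec (dim_col M)"
  shows "vnorm (M *\<^sub>v v) \<le> spec_norm M * vnorm v"
proof (cases "vnorm v = 0")
  case True
  hence "v = 0\<^sub>v (dim_col M)" using vnorm_eq_0_iff[OF v] by simp
  hence "M *\<^sub>v v = 0\<^sub>v (dim_row M)" by auto
  hence "vnorm (M *\<^sub>v v) = 0" using vnorm_eq_0_iff[of _ "dim_row M"] by auto
  thus ?thesis using True by simp
next
  case False
  hence s: "vnorm v > 0" using vnorm_nonneg[of v] by simp
  define v' where "v' = (1 / vnorm v) \<cdot>\<^sub>v v"
  have "v' \<in> carrier_vec (dim_col M)" "vnorm v' = 1"
    using v s by (simp_all add: v'_def vnorm_smult)
  then have "vnorm (M *\<^sub>v v') \<le> spec_norm M"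
    unfolding spec_norm_def by (intro cSup_upper bdd_above_spec_norm) auto
  moreover have "M *\<^sub>v v' = (1 / vnorm v) \<cdot>\<^sub>v (M *\<^sub>v v)"
    unfolding v'_def using v by (intro mult_mat_vec[of M "dim_row M" "dim_col M"]) auto
  ultimately show ?thesis using s by (simp add: vnorm_smult field_simps)
qed

lemma spec_norm_nonneg:
  assumes "0 < dim_col M"
  shows "0 \<le> spec_norm M"
proof -
  have "(\<Sum>i<dim_col M. (if i = 0 then 1 else 0 :: real)\<^sup>2) = (\<Sum>i<dim_col M. (if i = 0 then 1 else 0 :: real))"
    by (intro sum.cong) auto
  also have "\<dots> = 1" using assms by simp
  finally have "(\<Sum>i<dim_col M. (if i = 0 then 1 else 0 :: real)\<^sup>2) = 1" .
  then have "unit_vec (dim_col M) 0 \<in> {v \<in> carrier_vec (dim_col M). vnorm v = 1}"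
    by (auto simp: vnorm_def unit_vec_def)
  then have "vnorm (M *\<^sub>v unit_vec (dim_col M) 0) \<le> spec_norm M"
    unfolding spec_norm_def by (intro cSup_upper bdd_above_spec_norm) auto
  then show ?thesis using vnorm_nonneg order_trans by blast
qed

lemma abs_quadratic_form_le:
  assumes M: "M \<in> carrier_mat d d" and v: "v \<in> carrier_vec d"
  shows "\<bar>v \<bullet> (M *\<^sub>v v)\<bar> \<le> spec_norm M * (v \<bullet> v)"
proof -
  have "\<bar>v \<bullet> (M *\<^sub>v v)\<bar> \<le> vnorm v * vnorm (M *\<^sub>v v)"
    using M v by (intro abs_scalar_prod_le_vnorm) auto
  also have "\<dots> \<le> vnorm v * (spec_norm M * vnorm v)"
    using M v by (intro mult_left_mono vnorm_mult_mat_vec_le vnorm_nonneg) auto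
  finally show ?thesis by (simp add: vnorm_sq[symmetric] power2_eq_square mult_ac)
qed

section \<open>Orthonormal bases of column spaces\<close>

definition orthonormal :: "real vec list \<Rightarrow> bool" where
  "orthonormal us \<longleftrightarrow> (\<forall>a<length us. \<forall>b<length us. us ! a \<bullet> us ! b = (if a = b then 1 else 0))"

lemma (in vec_space) exists_lin_indpt_cols_spanning:
  assumes A: "A \<in> carrier_mat n nc"
  obtains S where "S \<subseteq> set (cols A)" "lin_indpt S" "card S = rank A" "set (cols A) \<subseteq> span S"
proof -
  let ?P = "\<lambda>T. T \<subseteq> set (cols A) \<and> lin_indpt T"
  obtain S where S: "maximal S ?P"
    using maximal_exists_superset[of "set (cols A)" ?P "{}"] by (auto simp: lin_dep_def)
  have SP: "S \<subseteq> set (cols A)" "lin_indpt S" using S unfolding maximal_def by auto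
  have colsC: "set (cols A) \<subseteq> carrier_vec n" using A by (auto simp: cols_def)
  have "c \<in> span S" if c: "c \<in> set (cols A)" for c
  proof (cases "c \<in> S")
    case True then show ?thesis using in_own_span SP colsC by blast
  next
    case False
    have "lin_dep (S \<union> {c})"
    proof (rule ccontr)
      assume "\<not> lin_dep (S \<union> {c})"
      then have "?P (S \<union> {c})" using SP c by simp
      then have "S \<union> {c} = S" using S unfolding maximal_def by blast
      with False show False by auto
    qed
    then show ?thesis using lin_dep_iff_in_span[of S c] SP c colsC False by auto
  qed
  then show thesis using SP rank_card_indpt[OF A S] by (intro that) auto
qed

lemma orthonormal_normalize:
  assumes "corthogonal (vs :: real vec list)" "set vs \<subseteq> carrier_vec d"
  shows "orthonormal (map (\<lambda>v. (1 / vnorm v) \<cdot>\<^sub>v v) vs)"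
  unfolding orthonormal_def
proof (intro allI impI)
  let ?us = "map (\<lambda>v. (1 / vnorm v) \<cdot>\<^sub>v v) vs"
  fix a b assume "a < length ?us" "b < length ?us"
  then have a: "a < length vs" and b: "b < length vs" by auto
  have "vs ! a \<in> carrier_vec d" "vs ! b \<in> carrier_vec d" using a b assms(2) by auto
  then have us_ab: "?us ! a \<bullet> ?us ! b = (vs ! a \<bullet> vs ! b) / (vnorm (vs ! a) * vnorm (vs ! b))"
    using a b by simp
  show "?us ! a \<bullet> ?us ! b = (if a = b then 1 else 0)"
  proof (cases "a = b")
    case True
    have "vs ! a \<bullet> vs ! a \<noteq> 0" using corthogonalD[OF assms(1) a a] by simp
    then have "(vnorm (vs ! a))\<^sup>2 \<noteq> 0" using vnorm_sq[of "vs ! a"] by simp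
    then show ?thesis using us_ab True by (simp only: vnorm_sq[symmetric]) (simp add: power2_eq_square)
  next
    case False
    then show ?thesis using us_ab corthogonalD[OF assms(1) a b] by simp
  qed
qed

text \<open>The last property says that the column space of \<open>M\<close> lies in the span of \<open>us\<close>.\<close>
lemma exists_orthonormal_col_basis:
  fixes M :: "real mat"
  assumes M: "M \<in> carrier_mat d nc"
  obtains us where "set us \<subseteq> carrier_vec d" "length us = vec_space.rank d M" "orthonormal us"
    "\<And>w c. w \<in> carrier_vec d \<Longrightarrow> \<forall>u\<in>set us. w \<bullet> u = 0 \<Longrightarrow> c \<in> set (cols M) \<Longrightarrow> w \<bullet> c = 0"
proof -
  interpret V: cof_vec_space d "TYPE(real)" .
  obtain S where S: "S \<subseteq> set (cols M)" "V.lin_indpt S" "card S = V.rank M" "set (cols M) \<subseteq> V.span S"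
    using V.exists_lin_indpt_cols_spanning[OF M] .
  have SC: "S \<subseteq> carrier_vec d" using S(1) M by (auto simp: cols_def)
  obtain ws where ws: "set ws = S" "distinct ws" using finite_distinct_list[OF finite_subset[OF S(1)]] by auto
  define vs where "vs = gram_schmidt d ws"
  have "set ws \<subseteq> carrier_vec d" "V.lin_indpt (set ws)" using ws(1) SC S(2) by simp_all
  note gs = V.gram_schmidt_result[OF this(1) ws(2) this(2) vs_def]
  define us where "us = map (\<lambda>v. (1 / vnorm v) \<cdot>\<^sub>v v) vs"
  have perp: "w \<bullet> c = 0" if w: "w \<in> carrier_vec d" "\<forall>u\<in>set us. w \<bullet> u = 0" and c: "c \<in> set (cols M)" for w c
  proof -
    have "w \<bullet> v = 0" if v: "v \<in> set vs" for v
    proof -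
      obtain a where a: "a < length vs" "v = vs ! a" using v by (auto simp: in_set_conv_nth)
      have "v \<bullet> v \<noteq> 0" using corthogonalD[OF gs(2) a(1) a(1)] a(2) by simp
      then have "vnorm v \<noteq> 0" using vnorm_sq[of v] by auto
      moreover have "w \<bullet> ((1 / vnorm v) \<cdot>\<^sub>v v) = 0" using w(2) v by (simp add: us_def)
      moreover have "w \<bullet> ((1 / vnorm v) \<cdot>\<^sub>v v) = (1 / vnorm v) * (w \<bullet> v)"
        using w(1) subsetD[OF gs(3) v] by simp
      ultimately show ?thesis by simp
    qed
    then have "w \<in> V.orthogonal_complement (set vs)"
      using w by (simp add: V.orthogonal_complement_def)
    then have "w \<in> V.orthogonal_complement (V.span (set vs))"
      using V.in_orthogonal_complement_span[OF gs(3)] by simp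
    moreover have "c \<in> V.span (set vs)" using c S(4) gs(1) ws(1) by auto
    ultimately show ?thesis unfolding V.orthogonal_complement_def by simp
  qed
  show thesis
  proof (rule that)
    show "set us \<subseteq> carrier_vec d" using gs(3) by (auto simp: us_def)
    show "length us = vec_space.rank d M"
      using gs(4) S(3) distinct_card[OF ws(2)] ws(1) by (simp add: us_def)
    show "orthonormal us" unfolding us_def by (rule orthonormal_normalize[OF gs(2,3)])
  qed (fact perp)
qed

lemma scalar_prod_vec_sum:
  assumes "y \<in> carrier_vec d" "\<And>l. l < r \<Longrightarrow> us ! l \<in> carrier_vec d"
  shows "vec d (\<lambda>i. \<Sum>l<r. c l * us ! l $ i) \<bullet> y = (\<Sum>l<r. c l * (us ! l \<bullet> y))"
proof -
  have "vec d (\<lambda>i. \<Sum>l<r. c l * us ! l $ i) \<bullet> y = (\<Sum>i<d. (\<Sum>l<r. c l * us ! l $ i) * y $ i)"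
    using assms(1) by (simp add: scalar_prod_def atLeast0LessThan)
  also have "\<dots> = (\<Sum>l<r. \<Sum>i<d. c l * (us ! l $ i * y $ i))"
    by (simp add: sum_distrib_right mult.assoc sum.swap[of _ "{..<d}"])
  also have "\<dots> = (\<Sum>l<r. c l * (us ! l \<bullet> y))"
    using assms by (intro sum.cong refl) (simp add: scalar_prod_def atLeast0LessThan sum_distrib_left)
  finally show ?thesis .
qed

lemma orthonormal_projection:
  assumes us: "set us \<subseteq> carrier_vec d" "orthonormal us" and x: "x \<in> carrier_vec d"
  obtains p where "p \<in> carrier_vec d" "p \<bullet> p = (\<Sum>l<length us. (us ! l \<bullet> x)\<^sup>2)"
    "\<And>u. u \<in> set us \<Longrightarrow> (x - p) \<bullet> u = 0"
proof -
  let ?r = "length us"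
  define c where "c l = us ! l \<bullet> x" for l
  define p where "p = vec d (\<lambda>i. \<Sum>l<?r. c l * us ! l $ i)"
  have pC: "p \<in> carrier_vec d" by (simp add: p_def)
  have ul: "l < ?r \<Longrightarrow> us ! l \<in> carrier_vec d" for l using us(1) by auto
  have pu: "p \<bullet> us ! m = c m" if m: "m < ?r" for m
  proof -
    have "p \<bullet> us ! m = (\<Sum>l<?r. c l * (us ! l \<bullet> us ! m))"
      unfolding p_def by (rule scalar_prod_vec_sum[OF ul[OF m] ul])
    also have "\<dots> = (\<Sum>l<?r. if l = m then c l else 0)"
      using us(2) m by (intro sum.cong refl) (auto simp: orthonormal_def)
    finally show ?thesis using m by (simp add: sum.delta')
  qed
  show thesis
  proof (rule that[OF pC])
    have "p \<bullet> p = (\<Sum>l<?r. c l * (us ! l \<bullet> p))"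
      using scalar_prod_vec_sum[of p d ?r us c, OF pC ul] by (simp add: p_def[symmetric])
    also have "\<dots> = (\<Sum>l<?r. (c l)\<^sup>2)"
      using pu ul pC by (intro sum.cong refl) (simp add: comm_scalar_prod[of _ d p] power2_eq_square)
    finally show "p \<bullet> p = (\<Sum>l<?r. (us ! l \<bullet> x)\<^sup>2)" by (simp add: c_def)
  next
    fix u assume "u \<in> set us"
    then obtain m where m: "m < ?r" "u = us ! m" by (auto simp: in_set_conv_nth)
    have "(x - p) \<bullet> u = x \<bullet> u - p \<bullet> u"
      using x pC ul[OF m(1)] m(2) by (simp add: minus_scalar_prod_distrib)
    then show "(x - p) \<bullet> u = 0"
      using pu[OF m(1)] m x ul[OF m(1)] by (simp add: c_def comm_scalar_prod[of _ d x])
  qed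
qed

text \<open>A symmetric matrix kills the orthogonal complement of its column space, so the
  quadratic form only sees the projection of \<open>x\<close> onto that space.\<close>
lemma abs_quadratic_form_le_orthonormal:
  assumes M: "M \<in> carrier_mat d d" and sym: "M\<^sup>T = M"
    and us: "set us \<subseteq> carrier_vec d" "orthonormal us"
    and span: "\<And>w c. w \<in> carrier_vec d \<Longrightarrow> \<forall>u\<in>set us. w \<bullet> u = 0 \<Longrightarrow> c \<in> set (cols M) \<Longrightarrow> w \<bullet> c = 0"
    and x: "x \<in> carrier_vec d"
  shows "\<bar>x \<bullet> (M *\<^sub>v x)\<bar> \<le> spec_norm M * (\<Sum>l<length us. (us ! l \<bullet> x)\<^sup>2)"
proof -
  obtain p where p: "p \<in> carrier_vec d" "p \<bullet> p = (\<Sum>l<length us. (us ! l \<bullet> x)\<^sup>2)"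
      "\<And>u. u \<in> set us \<Longrightarrow> (x - p) \<bullet> u = 0"
    using orthonormal_projection[OF us x] by blast
  define w where "w = x - p"
  have wC: "w \<in> carrier_vec d" using x p(1) by (simp add: w_def)
  have xpw: "x = p + w" using x p(1) by (intro eq_vecI) (auto simp: w_def)
  have Mw: "M *\<^sub>v w = 0\<^sub>v d"
  proof (rule eq_vecI)
    fix i assume "i < dim_vec (0\<^sub>v d :: real vec)"
    then have i: "i < d" by simp
    have "row M i = col M i"
      using i M sym row_transpose[of i M] by (metis carrier_matD(2))
    then have "(M *\<^sub>v w) $ i = w \<bullet> col M i"
      using i M wC by (simp add: comm_scalar_prod[of _ d w])
    also have "\<dots> = 0"
      using span[OF wC] p(3) i M by (simp add: w_def cols_def)
    finally show "(M *\<^sub>v w) $ i = 0\<^sub>v d $ i" using i by simp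
  qed (use M in simp)
  have "x \<bullet> (M *\<^sub>v x) = p \<bullet> (M *\<^sub>v p) + w \<bullet> (M *\<^sub>v p)"
    using M p(1) wC Mw by (subst (1 2) xpw) (simp add: mult_add_distrib_mat_vec add_scalar_prod_distrib[of _ d])
  also have "w \<bullet> (M *\<^sub>v p) = (M\<^sup>T *\<^sub>v w) \<bullet> p"
    using M p(1) wC by (simp add: transpose_vec_mult_scalar)
  also have "\<dots> = 0" using Mw p(1) by (simp add: sym)
  finally show ?thesis using abs_quadratic_form_le[OF M p(1)] p(2) by simp
qed

section \<open>Truncation\<close>

definition quad_form :: "nat \<Rightarrow> real mat \<Rightarrow> (nat \<Rightarrow> real) \<Rightarrow> real" where
  "quad_form d M x = vec d x \<bullet> (M *\<^sub>v vec d x)"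

lemma quad_form_eq_sum:
  "M \<in> carrier_mat d d \<Longrightarrow> quad_form d M x = (\<Sum>a<d. x a * (\<Sum>b<d. M $$ (a, b) * x b))"
  by (simp add: quad_form_def scalar_prod_def mult_mat_vec_def row_def atLeast0LessThan)

lemma quad_form_measurable:
  assumes "M \<in> carrier_mat d d"
  shows "quad_form d M \<in> borel_measurable (gauss_vec d)"
proof -
  have "quad_form d M = (\<lambda>x. \<Sum>a<d. x a * (\<Sum>b<d. M $$ (a, b) * x b))"
    using quad_form_eq_sum[OF assms] by blast
  then show ?thesis by simp
qed

lemma quad_form_reflect:
  "M \<in> carrier_mat d d \<Longrightarrow> quad_form d M (reflect d x) = quad_form d M x"
  by (simp add: quad_form_eq_sum reflect_def sum_negf)

lemma vec_reflect: "vec d (reflect d x) = - vec d x"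
  by (auto simp: reflect_def)

lemma dim_row_data_mat [simp]: "dim_row (data_mat d n \<omega>) = d"
  by (simp add: data_mat_def)

lemma index_XAM:
  "j < d \<Longrightarrow> (data_mat d n \<omega> *\<^sub>v meas_op d n \<omega> M) $ j = (\<Sum>i<n. \<omega> i j * quad_form d M (\<omega> i))"
  by (simp add: data_mat_def meas_op_def mult_mat_vec_def scalar_prod_def row_def
      sample_vec_def quad_form_def atLeast0LessThan)

lemma vnorm_XAM_eq:
  "vnorm ((1 / real n) \<cdot>\<^sub>v (data_mat d n \<omega> *\<^sub>v meas_op d n \<omega> M))
     = sqrt (\<Sum>j<d. ((1 / real n) * (\<Sum>i<n. \<omega> i j * quad_form d M (\<omega> i)))\<^sup>2)"
  unfolding vnorm_def by (simp add: index_XAM del: index_mult_mat_vec)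

lemma vnorm_XAM_le:
  assumes "\<And>j. j < d \<Longrightarrow> \<bar>\<Sum>i<n. \<omega> i j * quad_form d M (\<omega> i)\<bar> \<le> a"
  shows "vnorm ((1 / real n) \<cdot>\<^sub>v (data_mat d n \<omega> *\<^sub>v meas_op d n \<omega> M)) \<le> sqrt (real d) * (a / real n)"
proof -
  define v where "v = (1 / real n) \<cdot>\<^sub>v (data_mat d n \<omega> *\<^sub>v meas_op d n \<omega> M)"
  have "\<bar>v $ j\<bar> \<le> a / real n" if "j < d" for j
    using divide_right_mono[OF assms[OF that], of "real n"] that
    by (simp add: v_def index_XAM abs_mult del: index_mult_mat_vec)
  moreover have "dim_vec v = d" by (simp add: v_def)
  ultimately show ?thesis using vnorm_le_sqrt_dim[of v "a / real n"] by (simp add: v_def)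
qed

definition truncated_summand ::
  "nat \<Rightarrow> real mat \<Rightarrow> real vec list \<Rightarrow> real \<Rightarrow> nat \<Rightarrow> (nat \<Rightarrow> real) \<Rightarrow> real" where
  "truncated_summand d M vs T j x =
     (if \<forall>v\<in>set vs. \<bar>v \<bullet> vec d x\<bar> < T then x j * quad_form d M x else 0)"

lemma truncated_summand_measurable:
  assumes "M \<in> carrier_mat d d"
  shows "truncated_summand d M vs T j \<in> borel_measurable (gauss_vec d)"
proof -
  have [measurable]: "quad_form d M \<in> borel_measurable (gauss_vec d)"
    using assms by (rule quad_form_measurable)
  show ?thesis unfolding truncated_summand_def scalar_prod_vec by measurable
qed

lemma truncated_summand_reflect:
  assumes "M \<in> carrier_mat d d" "set vs \<subseteq> carrier_vec d" "j < d"
  shows "truncated_summand d M vs T j (reflect d x) = - truncated_summand d M vs T j x"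
proof -
  have "\<bar>v \<bullet> vec d (reflect d x)\<bar> = \<bar>v \<bullet> vec d x\<bar>" if "v \<in> set vs" for v
    using assms(2) that by (auto simp: vec_reflect)
  moreover have "reflect d x j = - x j" using assms(3) by (simp add: reflect_def)
  ultimately show ?thesis
    using assms(1) by (simp add: truncated_summand_def quad_form_reflect)
qed

lemma abs_truncated_summand_le:
  assumes M: "M \<in> carrier_mat d d" and sym: "M\<^sup>T = M"
    and us: "set us \<subseteq> carrier_vec d" "orthonormal us"
    and span: "\<And>w c. w \<in> carrier_vec d \<Longrightarrow> \<forall>u\<in>set us. w \<bullet> u = 0 \<Longrightarrow> c \<in> set (cols M) \<Longrightarrow> w \<bullet> c = 0"
    and j: "j < d" and T: "0 \<le> T"
  shows "\<bar>truncated_summand d M (map (unit_vec d) [0..<d] @ us) T j x\<bar> \<le> spec_norm M * length us * T ^ 3"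
proof -
  let ?vs = "map (unit_vec d) [0..<d] @ us"
  have m: "0 \<le> spec_norm M" using M j by (intro spec_norm_nonneg) auto
  show ?thesis
  proof (cases "\<forall>v\<in>set ?vs. \<bar>v \<bullet> vec d x\<bar> < T")
    case True
    moreover have "unit_vec d j \<in> set ?vs" using j by simp
    ultimately have "\<bar>unit_vec d j \<bullet> vec d x\<bar> < T" by blast
    then have xj: "\<bar>x j\<bar> \<le> T" using j by simp
    have "(us ! l \<bullet> vec d x)\<^sup>2 \<le> T\<^sup>2" if "l < length us" for l
    proof -
      have "us ! l \<in> set ?vs" using that by simp
      then have "\<bar>us ! l \<bullet> vec d x\<bar> \<le> T" using True by fastforce
      then show ?thesis using power_mono[OF _ abs_ge_zero, of _ T 2] by simp
    qed
    then have "(\<Sum>l<length us. (us ! l \<bullet> vec d x)\<^sup>2) \<le> length us * T\<^sup>2"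
      using sum_bounded_above[of "{..<length us}" _ "T\<^sup>2"] by simp
    then have "\<bar>quad_form d M x\<bar> \<le> spec_norm M * (length us * T\<^sup>2)"
      using abs_quadratic_form_le_orthonormal[OF M sym us span, of "vec d x"] m
      by (simp add: quad_form_def) (meson mult_left_mono order_trans)
    then have "\<bar>x j * quad_form d M x\<bar> \<le> T * (spec_norm M * (length us * T\<^sup>2))"
      unfolding abs_mult using xj T by (intro mult_mono) auto
    then show ?thesis
      using True by (simp add: truncated_summand_def power2_eq_square power3_eq_cube mult_ac)
  next
    case False
    then have "truncated_summand d M ?vs T j x = 0"
      unfolding truncated_summand_def by (rule if_not_P)
    then show ?thesis using m T by simp
  qed
qed

section \<open>The concentration bound\<close>

lemma measure_gauss_samples_large_unit_projection:
  assumes vs: "set vs \<subseteq> carrier_vec d" "\<And>v. v \<in> set vs \<Longrightarrow> v \<bullet> v = 1" "length vs \<le> 2 * d"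
    and n: "0 < n" and \<eta>: "0 < \<eta>" "\<eta> < 1"
  shows "measure (gauss_samples d n) {\<omega> \<in> space (gauss_samples d n).
           \<exists>i<n. \<exists>v\<in>set vs. sqrt (4 * ln (8 * real n * real d / \<eta>)) \<le> \<bar>v \<bullet> vec d (\<omega> i)\<bar>}
         \<le> \<eta> / 2"
proof (cases "d = 0")
  case False
  define T where "T = sqrt (4 * ln (8 * real n * real d / \<eta>))"
  have "1 \<le> n * d" using n False by (simp add: Suc_le_eq)
  then have "1 \<le> real n * real d" by (metis of_nat_1 of_nat_le_iff of_nat_mult)
  then have gt1: "1 < 8 * real n * real d / \<eta>" using \<eta> by (simp add: field_simps)
  then have "T\<^sup>2 = 4 * ln (8 * real n * real d / \<eta>)" by (simp add: T_def)
  then have e: "exp (- T\<^sup>2 / 4) = \<eta> / (8 * real n * real d)"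
    using gt1 by (simp add: exp_minus)
  have "real n * real (length vs) * (2 * exp (- T\<^sup>2 / 4)) \<le> real n * (2 * real d) * (2 * exp (- T\<^sup>2 / 4))"
    using vs(3) by (intro mult_right_mono mult_left_mono) auto
  also have "\<dots> = \<eta> / 2" unfolding e using n False by (simp add: field_simps)
  finally have "real n * real (length vs) * (2 * exp (- T\<^sup>2 / 4)) \<le> \<eta> / 2" .
  moreover have "0 \<le> T" using gt1 by (simp add: T_def)
  ultimately show ?thesis
    using gauss_samples_unit_tail_union[OF vs(1,2), of T n] by (simp add: T_def)
qed (use vs \<eta> in simp)

lemma hoeffding_exponent_le:
  fixes d n r m \<Lambda> \<eta> \<delta> :: real
  assumes pos: "0 < d" "0 < n" "0 < r" "0 < m" "0 < \<Lambda>" "0 < \<eta>" "0 < \<delta>"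
    and size: "128 * d * r\<^sup>2 * \<Lambda> ^ 3 * ln (4 * d / \<eta>) / \<delta>\<^sup>2 \<le> n"
  shows "exp (- (n * \<delta> * m / sqrt d)\<^sup>2 / (2 * n * (m * r * sqrt (4 * \<Lambda>) ^ 3)\<^sup>2)) \<le> \<eta> / (4 * d)"
proof -
  have "(sqrt (4 * \<Lambda>) ^ 3)\<^sup>2 = (sqrt (4 * \<Lambda>) ^ 2) ^ 3"
    by (simp only: power_mult[symmetric] mult.commute)
  then have "(m * r * sqrt (4 * \<Lambda>) ^ 3)\<^sup>2 = 64 * m\<^sup>2 * r\<^sup>2 * \<Lambda> ^ 3"
    using pos by (simp add: power_mult_distrib)
  moreover have "(n * \<delta> * m / sqrt d)\<^sup>2 = n\<^sup>2 * \<delta>\<^sup>2 * m\<^sup>2 / d"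
    using pos by (simp add: power_divide power_mult_distrib)
  ultimately have exponent: "(n * \<delta> * m / sqrt d)\<^sup>2 / (2 * n * (m * r * sqrt (4 * \<Lambda>) ^ 3)\<^sup>2)
      = n * \<delta>\<^sup>2 / (128 * d * r\<^sup>2 * \<Lambda> ^ 3)"
    using pos by (simp add: field_simps power2_eq_square)
  have "ln (4 * d / \<eta>) \<le> n * \<delta>\<^sup>2 / (128 * d * r\<^sup>2 * \<Lambda> ^ 3)"
    using size pos by (simp add: field_simps)
  then have "exp (- ((n * \<delta> * m / sqrt d)\<^sup>2 / (2 * n * (m * r * sqrt (4 * \<Lambda>) ^ 3)\<^sup>2)))
      \<le> exp (- ln (4 * d / \<eta>))"
    unfolding exponent by simp
  also have "\<dots> = \<eta> / (4 * d)" using pos by (simp add: exp_minus)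
  finally show ?thesis unfolding minus_divide_left .
qed

lemma (in prob_space) prob_ge_of_union_bound:
  assumes "A \<in> events" "B \<in> events" "C \<in> events" "space M - (A \<union> B) \<subseteq> C" "prob A + prob B \<le> \<eta>"
  shows "1 - \<eta> \<le> prob C"
proof -
  have "1 - \<eta> \<le> prob (space M - (A \<union> B))"
    using assms(1,2,5) prob_compl[of "A \<union> B"] measure_Un_le[of A M B] by simp
  also have "\<dots> \<le> prob C" using assms(4,3) by (rule finite_measure_mono)
  finally show ?thesis .
qed

lemma vnorm_XAM_le_of_truncation:
  assumes "\<And>i v. i < n \<Longrightarrow> v \<in> set vs \<Longrightarrow> \<bar>v \<bullet> vec d (\<omega> i)\<bar> < T"
    and "\<And>j. j < d \<Longrightarrow> \<bar>\<Sum>i<n. truncated_summand d M vs T j (\<omega> i)\<bar> < \<epsilon>"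
  shows "vnorm ((1 / real n) \<cdot>\<^sub>v (data_mat d n \<omega> *\<^sub>v meas_op d n \<omega> M)) \<le> sqrt (real d) * (\<epsilon> / real n)"
proof (rule vnorm_XAM_le)
  fix j assume "j < d"
  have "truncated_summand d M vs T j (\<omega> i) = \<omega> i j * quad_form d M (\<omega> i)" if "i < n" for i
    using assms(1)[OF that] by (simp add: truncated_summand_def)
  then show "\<bar>\<Sum>i<n. \<omega> i j * quad_form d M (\<omega> i)\<bar> \<le> \<epsilon>"
    using assms(2)[OF \<open>j < d\<close>] by (simp add: less_imp_le)
qed

lemma measure_truncated_sums_large:
  assumes M: "M \<in> carrier_mat d d" and sym: "M\<^sup>T = M"
    and us: "set us \<subseteq> carrier_vec d" "orthonormal us"
    and span: "\<And>w c. w \<in> carrier_vec d \<Longrightarrow> \<forall>u\<in>set us. w \<bullet> u = 0 \<Longrightarrow> c \<in> set (cols M) \<Longrightarrow> w \<bullet> c = 0"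
    and pos: "0 < n" "us \<noteq> []" "0 < spec_norm M" "0 < T" and \<epsilon>: "0 \<le> \<epsilon>"
  shows "measure (gauss_samples d n) {\<omega> \<in> space (gauss_samples d n).
           \<exists>j\<in>{..<d}. \<epsilon> \<le> \<bar>\<Sum>i<n. truncated_summand d M (map (unit_vec d) [0..<d] @ us) T j (\<omega> i)\<bar>}
         \<le> real d * (2 * exp (- \<epsilon>\<^sup>2 / (2 * real n * (spec_norm M * length us * T ^ 3)\<^sup>2)))"
proof -
  have "set (map (unit_vec d) [0..<d] @ us) \<subseteq> carrier_vec d" using us(1) by auto
  then show ?thesis
    using gauss_samples_hoeffding_odd_union[of "{..<d}" "truncated_summand d M (map (unit_vec d) [0..<d] @ us) T" d
        "spec_norm M * length us * T ^ 3" n \<epsilon>]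
      truncated_summand_measurable[OF M] truncated_summand_reflect[OF M]
      abs_truncated_summand_le[OF M sym us span] pos \<epsilon>
    by simp
qed

lemma measure_vnorm_XAM_le_nondegenerate:
  fixes M :: "real mat" and \<eta> \<delta> :: real
  assumes M: "M \<in> carrier_mat d d" and sym: "M\<^sup>T = M"
    and us: "set us \<subseteq> carrier_vec d" "orthonormal us" "length us \<le> d"
    and span: "\<And>w c. w \<in> carrier_vec d \<Longrightarrow> \<forall>u\<in>set us. w \<bullet> u = 0 \<Longrightarrow> c \<in> set (cols M) \<Longrightarrow> w \<bullet> c = 0"
    and pos: "0 < n" "us \<noteq> []" "0 < spec_norm M" and \<eta>: "0 < \<eta>" "\<eta> < 1" and \<delta>: "0 < \<delta>"
    and size: "128 * real d * (real (length us))\<^sup>2 * ln (8 * real n * real d / \<eta>) ^ 3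
                 * ln (4 * real d / \<eta>) / \<delta>\<^sup>2 \<le> real n"
  shows "1 - \<eta> \<le> measure (gauss_samples d n)
           {\<omega> \<in> space (gauss_samples d n).
              vnorm ((1 / real n) \<cdot>\<^sub>v (data_mat d n \<omega> *\<^sub>v meas_op d n \<omega> M)) \<le> \<delta> * spec_norm M}"
proof -
  let ?G = "gauss_samples d n"
  let ?X = "\<lambda>\<omega>. vnorm ((1 / real n) \<cdot>\<^sub>v (data_mat d n \<omega> *\<^sub>v meas_op d n \<omega> M))"
  interpret G: prob_space ?G by (rule prob_space_gauss_samples)
  have d: "0 < d" using us(3) pos(2) by (cases us) auto
  define \<Lambda> where "\<Lambda> = ln (8 * real n * real d / \<eta>)"
  define T where "T = sqrt (4 * \<Lambda>)"
  define \<epsilon> where "\<epsilon> = real n * \<delta> * spec_norm M / sqrt (real d)"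
  define vs where "vs = map (unit_vec d) [0..<d] @ us"
  have "1 \<le> real n * real d" using pos(1) d by (simp add: Suc_le_eq flip: of_nat_mult)
  then have \<Lambda>: "0 < \<Lambda>" unfolding \<Lambda>_def using \<eta> by (simp add: field_simps)
  have vs: "set vs \<subseteq> carrier_vec d" "\<And>v. v \<in> set vs \<Longrightarrow> v \<bullet> v = 1" "length vs \<le> 2 * d"
    using us by (auto simp: vs_def orthonormal_def in_set_conv_nth)
  define Bad1 where "Bad1 = {\<omega> \<in> space ?G. \<exists>i<n. \<exists>v\<in>set vs. T \<le> \<bar>v \<bullet> vec d (\<omega> i)\<bar>}"
  define Bad2 where
    "Bad2 = {\<omega> \<in> space ?G. \<exists>j\<in>{..<d}. \<epsilon> \<le> \<bar>\<Sum>i<n. truncated_summand d M vs T j (\<omega> i)\<bar>}"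
  have "measure ?G Bad1 \<le> \<eta> / 2"
    unfolding Bad1_def T_def \<Lambda>_def by (rule measure_gauss_samples_large_unit_projection[OF vs pos(1) \<eta>])
  moreover have "measure ?G Bad2 \<le> real d * (2 * exp (- \<epsilon>\<^sup>2 / (2 * real n * (spec_norm M * length us * T ^ 3)\<^sup>2)))"
    unfolding Bad2_def vs_def
    by (rule measure_truncated_sums_large[OF M sym us(1,2) span pos]) (use \<Lambda> \<delta> pos in \<open>simp_all add: T_def \<epsilon>_def\<close>)
  moreover have "exp (- \<epsilon>\<^sup>2 / (2 * real n * (spec_norm M * length us * T ^ 3)\<^sup>2)) \<le> \<eta> / (4 * real d)"
    unfolding \<epsilon>_def T_def using d pos \<Lambda> \<eta> \<delta> size by (intro hoeffding_exponent_le) (simp_all add: \<Lambda>_def)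
  ultimately have "measure ?G Bad1 + measure ?G Bad2 \<le> \<eta>"
    using d by (simp add: field_simps)
  moreover have "space ?G - (Bad1 \<union> Bad2) \<subseteq> {\<omega> \<in> space ?G. ?X \<omega> \<le> \<delta> * spec_norm M}"
  proof
    fix \<omega> assume \<omega>: "\<omega> \<in> space ?G - (Bad1 \<union> Bad2)"
    then have "?X \<omega> \<le> sqrt (real d) * (\<epsilon> / real n)"
      by (intro vnorm_XAM_le_of_truncation[where vs = vs and T = T]) (auto simp: Bad1_def Bad2_def not_le)
    also have "\<dots> = \<delta> * spec_norm M" using pos(1) d by (simp add: \<epsilon>_def)
    finally show "\<omega> \<in> {\<omega> \<in> space ?G. ?X \<omega> \<le> \<delta> * spec_norm M}" using \<omega> by simp
  qed
  moreover have [measurable]: "quad_form d M \<in> borel_measurable (gauss_vec d)"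
    using M by (rule quad_form_measurable)
  have "Bad1 \<in> sets ?G" "Bad2 \<in> sets ?G" "{\<omega> \<in> space ?G. ?X \<omega> \<le> \<delta> * spec_norm M} \<in> sets ?G"
    unfolding Bad1_def Bad2_def scalar_prod_vec vnorm_XAM_eq using truncated_summand_measurable[OF M]
    by measurable
  ultimately show ?thesis by (simp add: G.prob_ge_of_union_bound)
qed

lemma measure_vnorm_XAM_le:
  fixes M :: "real mat" and \<eta> \<delta> :: real
  assumes M: "M \<in> carrier_mat d d" and sym: "M\<^sup>T = M" and d: "0 < d"
    and \<eta>: "0 < \<eta>" "\<eta> < 1" and \<delta>: "0 < \<delta>"
    and size: "128 * real d * (real (vec_space.rank d M))\<^sup>2 * ln (8 * real n * real d / \<eta>) ^ 3
                 * ln (4 * real d / \<eta>) / \<delta>\<^sup>2 \<le> real n"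
  shows "1 - \<eta> \<le> measure (gauss_samples d n)
           {\<omega> \<in> space (gauss_samples d n).
              vnorm ((1 / real n) \<cdot>\<^sub>v (data_mat d n \<omega> *\<^sub>v meas_op d n \<omega> M)) \<le> \<delta> * spec_norm M}"
proof -
  obtain us where us: "set us \<subseteq> carrier_vec d" "length us = vec_space.rank d M" "orthonormal us"
    and span: "\<And>w c. w \<in> carrier_vec d \<Longrightarrow> \<forall>u\<in>set us. w \<bullet> u = 0 \<Longrightarrow> c \<in> set (cols M) \<Longrightarrow> w \<bullet> c = 0"
    using exists_orthonormal_col_basis[OF M] by blast
  have rk: "length us \<le> d" using us(2) vec_space.rank_le_nc[OF M] by simp
  show ?thesis
  proof (cases "0 < n \<and> us \<noteq> [] \<and> 0 < spec_norm M")
    case True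
    then have pos: "0 < n" "us \<noteq> []" "0 < spec_norm M" by auto
    show ?thesis
      using measure_vnorm_XAM_le_nondegenerate[OF M sym us(1,3) rk span pos \<eta> \<delta>] size by (simp add: us(2))
  next
    case False
    have m: "0 \<le> spec_norm M" using M d by (intro spec_norm_nonneg) auto
    have "quad_form d M x = 0" if "us = [] \<or> spec_norm M = 0" for x
      using abs_quadratic_form_le_orthonormal[OF M sym us(1,3) span, of "vec d x"] that
      by (auto simp: quad_form_def)
    then have "(\<Sum>i<n. \<omega> i j * quad_form d M (\<omega> i)) = 0" for \<omega> j
      using False m by (cases "n = 0") auto
    then have "vnorm ((1 / real n) \<cdot>\<^sub>v (data_mat d n \<omega> *\<^sub>v meas_op d n \<omega> M)) \<le> 0" for \<omega>
      using vnorm_XAM_le[where a = 0 and \<omega> = \<omega> and n = n and d = d and M = M] by simp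
    moreover have "0 \<le> \<delta> * spec_norm M" using \<delta> m by simp
    ultimately have "vnorm ((1 / real n) \<cdot>\<^sub>v (data_mat d n \<omega> *\<^sub>v meas_op d n \<omega> M)) \<le> \<delta> * spec_norm M"
      for \<omega> by (rule order_trans)
    then show ?thesis using \<eta> prob_space.prob_space[OF prob_space_gauss_samples] by simp
  qed
qed

section \<open>Polylogarithmic sample size\<close>

lemma one_le_one_plus_ln_div:
  assumes "0 < \<eta>" "\<eta> \<le> 1"
  shows "1 \<le> 1 + ln (real a / \<eta>)"
proof (cases "a = 0")
  case False
  then have "\<eta> \<le> real a" using assms by simp
  then show ?thesis using assms by simp
qed simp

lemma sample_size_le:
  fixes d n r k :: nat and \<eta> \<delta> :: real
  assumes d: "0 < d" and \<eta>: "0 < \<eta>" "\<eta> < 1" and \<delta>: "0 < \<delta>" and rk: "r \<le> k"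
    and n: "20000 * (1 + ln (real d * real n / \<eta>)) ^ 4 * real k ^ 2 * real d / \<delta>\<^sup>2 \<le> real n"
  shows "128 * real d * (real r)\<^sup>2 * ln (8 * real n * real d / \<eta>) ^ 3 * ln (4 * real d / \<eta>) / \<delta>\<^sup>2
           \<le> real n"
proof (cases "r = 0")
  case False
  define L where "L = 1 + ln (real d * real n / \<eta>)"
  define \<Lambda> where "\<Lambda> = ln (8 * real n * real d / \<eta>)"
  have L: "1 \<le> L"
    using one_le_one_plus_ln_div[of \<eta> "d * n"] \<eta> by (simp add: L_def)
  have "0 < 20000 * L ^ 4 * real k ^ 2 * real d / \<delta>\<^sup>2"
    using L False rk d \<delta> by simp
  then have "0 < n" using n by (simp add: L_def)
  then have "1 \<le> d * n" using d by (simp add: Suc_le_eq)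
  then have "1 \<le> real d * real n" by (metis of_nat_1 of_nat_le_iff of_nat_mult)
  then have dn: "1 \<le> real d * real n / \<eta>" using \<eta> by (simp add: field_simps)
  have "\<Lambda> = ln (8 * (real d * real n / \<eta>))"
    unfolding \<Lambda>_def by (rule arg_cong[where f = ln]) (simp add: field_simps)
  also have "\<dots> = ln 8 + ln (real d * real n / \<eta>)" using dn by (intro ln_mult_pos) auto
  finally have \<Lambda>_eq: "\<Lambda> = ln 8 + ln (real d * real n / \<eta>)" .
  have "ln (8 :: real) \<le> 3"
    using ln_realpow[of 2 3] ln_2_less_1 by simp
  moreover have "0 \<le> ln (real d * real n / \<eta>)" using dn by simp
  ultimately have \<Lambda>: "0 \<le> \<Lambda>" "\<Lambda> \<le> 3 * L" unfolding \<Lambda>_eq L_def by simp_all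
  have ln4: "0 \<le> ln (4 * real d / \<eta>)" "ln (4 * real d / \<eta>) \<le> \<Lambda>"
    using d \<eta> \<open>0 < n\<close> unfolding \<Lambda>_def by (auto simp: field_simps intro!: mult_right_mono)
  have "\<Lambda> ^ 3 * ln (4 * real d / \<eta>) \<le> (3 * L) ^ 3 * (3 * L)"
    using \<Lambda> ln4 by (intro mult_mono power_mono) auto
  also have "\<dots> = 81 * L ^ 4" by (simp add: power_mult_distrib eval_nat_numeral)
  finally have A: "\<Lambda> ^ 3 * ln (4 * real d / \<eta>) \<le> 81 * L ^ 4" .
  have "(real r)\<^sup>2 \<le> (real k)\<^sup>2" using rk by (simp add: power_mono)
  then have "128 * real d * (real r)\<^sup>2 * (\<Lambda> ^ 3 * ln (4 * real d / \<eta>))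
      \<le> 128 * real d * (real k)\<^sup>2 * (81 * L ^ 4)"
    using \<Lambda> ln4 by (intro mult_mono[OF _ A] mult_left_mono) auto
  also have "\<dots> = 10368 * (L ^ 4 * real k ^ 2 * real d)" by simp
  also have "\<dots> \<le> 20000 * (L ^ 4 * real k ^ 2 * real d)" using L by (intro mult_right_mono) auto
  finally have "128 * real d * (real r)\<^sup>2 * \<Lambda> ^ 3 * ln (4 * real d / \<eta>) / \<delta>\<^sup>2
      \<le> 20000 * L ^ 4 * real k ^ 2 * real d / \<delta>\<^sup>2"
    by (intro divide_right_mono) (simp_all add: mult_ac)
  then show ?thesis using n by (simp add: L_def \<Lambda>_def)
qed simp

theorem lemma6:
  "\<exists>(c::real) (p::nat). c > 0 \<and>
     (\<forall>(d::nat) (n::nat) (\<eta>::real) (k::nat) (\<delta>::real) (M::real mat).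
        let C = c * (1 + ln (real d * real n / \<eta>)) ^ p in
        0 < \<eta> \<and> \<eta> < 1 \<and> real d \<ge> C \<and> 0 < \<delta> \<and> \<delta> < 1 \<and>
        M \<in> carrier_mat d d \<and> M\<^sup>T = M \<and> vec_space.rank d M \<le> k \<and>
        real n \<ge> C * real k ^ 2 * real d / \<delta>\<^sup>2
        \<longrightarrow> measure (gauss_samples d n)
              {\<omega> \<in> space (gauss_samples d n).
                 vnorm ((1 / real n) \<cdot>\<^sub>v (data_mat d n \<omega> *\<^sub>v meas_op d n \<omega> M))
                   \<le> \<delta> * spec_norm M}
            \<ge> 1 - \<eta>)"
  unfolding Let_def
proof (intro exI[of _ "20000::real"] exI[of _ "4::nat"] conjI allI impI, simp, elim conjE)
  fix d n :: nat and \<eta> \<delta> :: real and k and M :: "real mat"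
  assume \<eta>: "0 < \<eta>" "\<eta> < 1" and dC: "20000 * (1 + ln (real d * real n / \<eta>)) ^ 4 \<le> real d"
    and \<delta>: "0 < \<delta>" "\<delta> < 1" and M: "M \<in> carrier_mat d d" and sym: "M\<^sup>T = M"
    and rk: "vec_space.rank d M \<le> k"
    and n: "20000 * (1 + ln (real d * real n / \<eta>)) ^ 4 * real k ^ 2 * real d / \<delta>\<^sup>2 \<le> real n"
  have "1 \<le> (1 + ln (real d * real n / \<eta>)) ^ 4"
    using one_le_one_plus_ln_div[of \<eta> "d * n"] \<eta> by (simp add: one_le_power)
  with dC have d: "0 < d" by simp
  show "1 - \<eta> \<le> measure (gauss_samples d n)
          {\<omega> \<in> space (gauss_samples d n).
             vnorm ((1 / real n) \<cdot>\<^sub>v (data_mat d n \<omega> *\<^sub>v meas_op d n \<omega> M)) \<le> \<delta> * spec_norm M}"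
    by (rule measure_vnorm_XAM_le[OF M sym d \<eta> \<delta>(1) sample_size_le[OF d \<eta> \<delta>(1) rk n]])
qed

end
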